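(* Let $n>m>0$ be integers. For any $s_0\in(0,1)$ and $\alpha\in\left(-\frac{n-m+1}{2}s_0,0\right)$ there is a constant $C=C(s_0,n,m)>0$ such that $\int_{(\mathbb{S}^{n-1})^{m}}|\det(w_{t_1}\cdot w_{t_2})_{1\le t_1,t_2\le m}|^{\alpha}\,d\sigma(w_1)\cdots d\sigma(w_m)\le C.$
   Context: $\sigma$ is the standard surface measure on the unit sphere $\mathbb{S}^{n-1}\subset\mathbb{R}^n$, and $(w_{t_1}\cdot w_{t_2})$ is the $m\times m$ Gram matrix of the vectors $w_1,\dots,w_m\in\mathbb{S}^{n-1}$. *)

theory Defs
  imports "HOL-Analysis.Analysis"
begin

text \<open>Standard surface measure on the unit sphere S^{n-1} of real^'n (n = CARD('n)),
  defined via the cone construction:  sigma(A) = n * lambda({r x | x in A, 0 < r <= 1}),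
  i.e. n times the push-forward of Lebesgue measure on the punctured closed unit ball
  under the radial projection x |-> x / |x|.\<close>
definition sphere_measure :: "(real ^ 'n) measure" where
  "sphere_measure =
     density
       (distr (restrict_space lborel (cball (0::real^'n) 1 - {0}))
              (restrict_space borel (sphere (0::real^'n) 1))
              (\<lambda>x. x /\<^sub>R norm x))
       (\<lambda>_. ennreal (real CARD('n)))"

definition gram :: "('m::finite \<Rightarrow> real ^ 'n) \<Rightarrow> real ^ 'm ^ 'm" where
  "gram w = (\<chi> i j. w i \<bullet> w j)"

definition gram_power :: "real \<Rightarrow> ('m::finite \<Rightarrow> real ^ 'n) \<Rightarrow> ennreal" where
  "gram_power \<alpha> w = (if det (gram w) = 0 then \<infinity> else ennreal (\<bar>det (gram w)\<bar> powr \<alpha>))"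

end

theory Submission
  imports Defs
begin

(* Adding the vectors one at a time, the Gram determinant factors as
   det (w_t1 . w_t2) = prod_k dist (w_k, span {w_1, ..., w_(k-1)})^2,
   so by Fubini it suffices to bound the integral of dist (y, V)^(2 alpha) over the sphere
   uniformly in the subspaces V of dimension d < m.  The cone construction of sigma reduces
   this to the unit ball, where the tube {x. dist (x, V) <= t} has Lebesgue measure at most
   2^n t^(n - d), as one sees after rotating the orthogonal complement of V onto coordinate
   axes.  Summing over the dyadic shells 2^-(j+1) < dist (x, V) <= 2^-j gives a geometric
   series of ratio 2^(-2 alpha - (n - d)) <= 2^(s0 - 1) < 1. *)

(* |x| powr a with the value \<infinity> at 0: the limit there when a < 0, and the convention that
   keeps singular_powr a multiplicative for every a. *)
definition singular_powr :: "real \<Rightarrow> real \<Rightarrow> ennreal" where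
  "singular_powr a x = (if x = 0 then \<infinity> else ennreal (\<bar>x\<bar> powr a))"

lemma singular_powr_neq_zero: "singular_powr a x \<noteq> 0"
  by (simp add: singular_powr_def)

lemma singular_powr_mult: "singular_powr a (x * y) = singular_powr a x * singular_powr a y"
proof (cases "x = 0 \<or> y = 0")
  case True
  then show ?thesis
    using singular_powr_neq_zero by (auto simp: singular_powr_def ennreal_top_mult ennreal_mult_top)
next
  case False
  then show ?thesis
    by (simp add: singular_powr_def abs_mult powr_mult ennreal_mult)
qed

lemma singular_powr_square: "singular_powr a (x\<^sup>2) = singular_powr (2 * a) x"
proof (cases "x = 0")
  case False
  have "\<bar>x\<^sup>2\<bar> powr a = (\<bar>x\<bar> * \<bar>x\<bar>) powr a"
    by (simp add: power2_eq_square abs_mult)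
  also have "\<dots> = \<bar>x\<bar> powr (2 * a)"
    by (simp only: powr_mult abs_ge_zero powr_add[symmetric] mult_2)
  finally have "\<bar>x\<^sup>2\<bar> powr a = \<bar>x\<bar> powr (2 * a)" .
  then show ?thesis
    using False by (simp add: singular_powr_def)
qed (simp add: singular_powr_def)

lemma singular_powr_antimono:
  assumes "a \<le> 0" "0 \<le> x" "x \<le> y"
  shows "singular_powr a y \<le> singular_powr a x"
  using assms by (auto simp: singular_powr_def intro!: ennreal_leI powr_mono2')

lemma borel_measurable_singular_powr [measurable]:
  assumes [measurable]: "f \<in> borel_measurable M"
  shows "(\<lambda>x. singular_powr a (f x)) \<in> borel_measurable M"
  unfolding singular_powr_def by measurable

(* The matrix (v i \<bullet> w j) over the indices in S, padded with the identity outside S, so that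
   gram_det S w is the Gram determinant of the subfamily of w indexed by S. *)
definition gram_on ::
    "'m set \<Rightarrow> ('m::finite \<Rightarrow> real^'n) \<Rightarrow> ('m \<Rightarrow> real^'n) \<Rightarrow> real^'m^'m" where
  "gram_on S v w = (\<chi> i j. if i \<in> S \<and> j \<in> S then v i \<bullet> w j else if i = j then 1 else 0)"

definition gram_det :: "'m set \<Rightarrow> ('m::finite \<Rightarrow> real^'n) \<Rightarrow> real" where
  "gram_det S w = det (gram_on S w w)"

lemma gram_power_eq_singular_powr: "gram_power a w = singular_powr a (gram_det UNIV w)"
  by (simp add: gram_power_def singular_powr_def gram_det_def gram_on_def gram_def)

lemma gram_det_empty: "gram_det {} w = 1"
proof -
  have "gram_on {} w w = mat 1"
    by (simp add: gram_on_def mat_def vec_eq_iff)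
  then show ?thesis
    by (simp add: gram_det_def)
qed

lemma gram_det_cong: "(\<And>i. i \<in> S \<Longrightarrow> w i = w' i) \<Longrightarrow> gram_det S w = gram_det S w'"
  unfolding gram_det_def gram_on_def by (simp cong: if_cong)

lemma transpose_gram_on: "transpose (gram_on S v w) = gram_on S w v"
  by (simp add: transpose_def gram_on_def vec_eq_iff inner_commute)

lemma det_gram_on_subtract_left:
  assumes "k \<notin> S" and y: "y \<in> span (v ` S)"
  shows "det (gram_on (insert k S) (v(k := v k - y)) w) = det (gram_on (insert k S) v w)"
proof -
  let ?G = "gram_on (insert k S) v w"
  \<comment> \<open>Replacing v k by v k - y subtracts L y from row k, and L maps v i to row i for i \<in> S.\<close>
  define L where "L x = (\<chi> j. if j \<in> insert k S then x \<bullet> w j else 0)" for x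
  have "linear L"
    by (auto simp: linear_iff L_def vec_eq_iff inner_add_left)
  have "L (v i) = row i ?G" if "i \<in> S" for i
    using that assms(1) by (auto simp: L_def row_def gram_on_def vec_eq_iff)
  then have "L ` v ` S \<subseteq> {row i ?G | i. i \<noteq> k}"
    using assms(1) by force
  then have "span (L ` v ` S) \<subseteq> span {row i ?G | i. i \<noteq> k}"
    by (rule span_mono)
  moreover have "- L y \<in> span (L ` v ` S)"
    using y linear_span_image[OF \<open>linear L\<close>, of "v ` S"] by (blast intro: span_neg)
  ultimately have "- L y \<in> vec.span {row i ?G | i. i \<noteq> k}"
    by (auto simp: span_vec_eq)
  then have "det (\<chi> r. if r = k then row k ?G + - L y else row r ?G) = det ?G"
    by (rule det_row_span)
  moreover have "gram_on (insert k S) (v(k := v k - y)) w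
      = (\<chi> r. if r = k then row k ?G + - L y else row r ?G)"
    by (auto simp: vec_eq_iff gram_on_def row_def L_def inner_diff_left)
  ultimately show ?thesis
    by simp
qed

lemma det_gram_on_subtract_right:
  assumes "k \<notin> S" "y \<in> span (w ` S)"
  shows "det (gram_on (insert k S) v (w(k := w k - y))) = det (gram_on (insert k S) v w)"
proof -
  have "det (gram_on (insert k S) v (w(k := w k - y)))
      = det (gram_on (insert k S) (w(k := w k - y)) v)"
    by (metis det_transpose transpose_gram_on)
  also have "\<dots> = det (gram_on (insert k S) w v)"
    by (rule det_gram_on_subtract_left[OF assms])
  also have "\<dots> = det (gram_on (insert k S) v w)"
    by (metis det_transpose transpose_gram_on)
  finally show ?thesis .
qed

lemma det_gram_on_insert_orthogonal:
  assumes "k \<notin> S" "\<And>i. i \<in> S \<Longrightarrow> z \<bullet> w i = 0"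
  shows "det (gram_on (insert k S) (w(k := z)) (w(k := z))) = (z \<bullet> z) * gram_det S w"
proof -
  let ?G = "gram_on S w w"
  have "gram_on (insert k S) (w(k := z)) (w(k := z))
      = (\<chi> r. if r = k then (z \<bullet> z) *s row k ?G else row r ?G)"
    using assms by (auto simp: vec_eq_iff gram_on_def row_def inner_commute)
  then have "det (gram_on (insert k S) (w(k := z)) (w(k := z)))
      = (z \<bullet> z) * det (\<chi> r. if r = k then row k ?G else row r ?G)"
    by (simp add: det_row_mul)
  also have "(\<chi> r. if r = k then row k ?G else row r ?G) = ?G"
    by (simp add: vec_eq_iff row_def)
  finally show ?thesis
    unfolding gram_det_def .
qed

lemma infdist_add_orthogonal_subspace:
  fixes y z :: "'a::euclidean_space"
  assumes "subspace V" "y \<in> V" "\<And>v. v \<in> V \<Longrightarrow> orthogonal z v"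
  shows "infdist (y + z) V = norm z"
proof (rule antisym)
  show "infdist (y + z) V \<le> norm z"
    using infdist_le[OF assms(2), of "y + z"] by (simp add: dist_norm)
  have "norm z \<le> dist (y + z) v" if "v \<in> V" for v
  proof -
    have "orthogonal z (y - v)"
      using assms that by (simp add: subspace_diff)
    then have "(norm (y + z - v))\<^sup>2 = (norm z)\<^sup>2 + (norm (y - v))\<^sup>2"
      using norm_add_Pythagorean[of z "y - v"] by (simp add: algebra_simps)
    then show ?thesis
      by (simp add: dist_norm power2_le_imp_le)
  qed
  then show "norm z \<le> infdist (y + z) V"
    using assms(2) by (subst infdist_notempty) (auto intro!: cINF_greatest)
qed

lemma gram_det_insert:
  fixes w :: "'m::finite \<Rightarrow> real^'n"
  assumes "k \<notin> S"
  shows "gram_det (insert k S) w = gram_det S w * (infdist (w k) (span (w ` S)))\<^sup>2"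
proof -
  obtain y z where y: "y \<in> span (w ` S)" and z: "\<And>v. v \<in> span (w ` S) \<Longrightarrow> orthogonal z v"
    and wk: "w k = y + z"
    using orthogonal_subspace_decomp_exists by metis
  define w' where "w' = w(k := z)"
  have "w' = w(k := w k - y)"
    by (simp add: w'_def wk)
  then have "gram_det (insert k S) w = det (gram_on (insert k S) w' w')"
    using det_gram_on_subtract_left[OF assms y, where w = w]
      det_gram_on_subtract_right[OF assms y, where v = w']
    by (simp add: gram_det_def)
  also have "\<dots> = (z \<bullet> z) * gram_det S w"
    using det_gram_on_insert_orthogonal[OF assms, where z = z and w = w] z
    by (simp add: w'_def orthogonal_def span_base)
  also have "z \<bullet> z = (infdist (w k) (span (w ` S)))\<^sup>2"
    using infdist_add_orthogonal_subspace[OF subspace_span y z] by (simp add: wk power2_norm_eq_inner)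
  finally show ?thesis
    by simp
qed

lemma prod_Basis_vec: "(\<Prod>b\<in>Basis. x \<bullet> b) = (\<Prod>i\<in>UNIV. x $ i)"
  by (simp add: Basis_vec_def cart_eq_inner_axis axis_eq_axis prod.UNION_disjoint)

lemma
  fixes a b :: "real^'n::finite"
  assumes "\<And>i. a $ i \<le> b $ i"
  shows emeasure_lborel_box_cart: "emeasure lborel (box a b) = ennreal (\<Prod>i\<in>UNIV. b $ i - a $ i)"
    and emeasure_lborel_cbox_cart: "emeasure lborel (cbox a b) = ennreal (\<Prod>i\<in>UNIV. b $ i - a $ i)"
proof -
  have "\<forall>c\<in>Basis. a \<bullet> c \<le> b \<bullet> c"
    using assms by (auto simp: Basis_vec_def cart_eq_inner_axis)
  moreover have "(\<Prod>c\<in>Basis. (b - a) \<bullet> c) = (\<Prod>i\<in>UNIV. b $ i - a $ i)"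
    by (simp add: prod_Basis_vec)
  ultimately show "emeasure lborel (box a b) = ennreal (\<Prod>i\<in>UNIV. b $ i - a $ i)"
    and "emeasure lborel (cbox a b) = ennreal (\<Prod>i\<in>UNIV. b $ i - a $ i)"
    by (simp_all add: emeasure_lborel_box_eq emeasure_lborel_cbox_eq)
qed

lemma linear_vec_reindex: "linear (\<lambda>x::real^'a::finite. \<chi> i. x $ p i)"
  by (auto simp: linear_iff vec_eq_iff)

lemma norm_vec_reindex:
  fixes p :: "'b::finite \<Rightarrow> 'a::finite"
  assumes "bij p"
  shows "norm (\<chi> i. x $ p i) = norm (x :: real^'a)"
proof -
  have "(\<Sum>i\<in>UNIV. (x $ p i)\<^sup>2) = (\<Sum>j\<in>UNIV. (x $ j)\<^sup>2)"
    using assms by (intro sum.reindex_bij_betw) simp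
  then show ?thesis
    by (simp add: norm_vec_def L2_set_def)
qed

lemma lborel_distr_vec_reindex:
  fixes p :: "'b::finite \<Rightarrow> 'a::finite"
  assumes "bij p"
  shows "distr lborel borel (\<lambda>x::real^'a. \<chi> i. x $ p i) = (lborel :: (real^'b) measure)"
proof (rule lborel_eqI[symmetric])
  let ?h = "\<lambda>x::real^'a. \<chi> i. x $ p i"
  let ?q = "inv p"
  have meas: "?h \<in> borel_measurable borel"
    using linear_vec_reindex[of p]
    by (simp add: borel_measurable_continuous_onI linear_continuous_on linear_conv_bounded_linear)
  fix l u :: "real^'b"
  assume Basis_le: "\<And>b. b \<in> Basis \<Longrightarrow> l \<bullet> b \<le> u \<bullet> b"
  have lu: "l $ i \<le> u $ i" for i
    using Basis_le[of "axis i 1"] by (simp add: axis_in_Basis_iff cart_eq_inner_axis)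
  have "?h -` box l u = box (\<chi> j. l $ ?q j) (\<chi> j. u $ ?q j)"
    using assms by (auto simp: mem_box_cart bij_inv_eq_iff) (metis bij_inv_eq_iff assms)+
  then have "emeasure (distr lborel borel ?h) (box l u) = emeasure lborel (box (\<chi> j. l $ ?q j) (\<chi> j. u $ ?q j))"
    using meas by (simp add: emeasure_distr)
  also have "\<dots> = ennreal (\<Prod>j\<in>UNIV. u $ ?q j - l $ ?q j)"
    using lu by (simp add: emeasure_lborel_box_cart)
  also have "(\<Prod>j\<in>UNIV. u $ ?q j - l $ ?q j) = (\<Prod>i\<in>UNIV. u $ i - l $ i)"
    using assms by (intro prod.reindex_bij_betw) (simp add: bij_imp_bij_inv)
  finally show "emeasure (distr lborel borel ?h) (box l u) = (\<Prod>b\<in>Basis. (u - l) \<bullet> b)"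
    by (simp add: prod_Basis_vec)
qed simp

lemma lborel_distr_orthogonal_wellorder:
  fixes f :: "real^'n::{finite,wellorder} \<Rightarrow> real^'n::_"
  assumes f: "orthogonal_transformation f"
  shows "distr lborel borel f = lborel"
proof (rule lborel_eqI[symmetric])
  have "linear f"
    using f by (rule orthogonal_transformation_linear)
  then have meas: "f \<in> borel_measurable borel"
    by (intro borel_measurable_continuous_onI linear_continuous_on)
      (simp add: linear_conv_bounded_linear)
  fix l u :: "real^'n::{finite,wellorder}"
  assume Basis_le: "\<And>b. b \<in> Basis \<Longrightarrow> l \<bullet> b \<le> u \<bullet> b"
  have "f -` box l u \<in> sets borel"
    using measurable_sets_borel[OF meas, of "box l u"] by simp
  then have "emeasure (distr lborel borel f) (box l u) = emeasure lebesgue (f -` box l u)"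
    using meas by (simp add: emeasure_distr emeasure_completion)
  also have "f -` box l u = inv f ` box l u"
    using f by (simp add: bij_vimage_eq_inv_image orthogonal_transformation_bij)
  also have "emeasure lebesgue (inv f ` box l u) = emeasure lebesgue (box l u)"
    using measure_orthogonal_image[OF orthogonal_transformation_inv[OF f]]
      measurable_orthogonal_image[OF orthogonal_transformation_inv[OF f]]
    by (simp add: emeasure_eq_measure2)
  finally show "emeasure (distr lborel borel f) (box l u) = (\<Prod>b\<in>Basis. (u - l) \<bullet> b)"
    using Basis_le by (simp add: emeasure_completion emeasure_lborel_box_eq)
qed simp

(* Change_Of_Vars proves the invariance of Lebesgue measure under orthogonal maps only for
   index types of class wellorder.  This copy of a finite type, ordered through to_nat,
   transfers it to arbitrary finite index types by reindexing coordinates. *)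
typedef 'a wellordered = "UNIV :: 'a set"
  morphisms of_wellordered to_wellordered by simp

instantiation wellordered :: (finite) linorder
begin

definition less_eq_wellordered :: "'a wellordered \<Rightarrow> 'a wellordered \<Rightarrow> bool" where
  "x \<le> y \<longleftrightarrow> to_nat (of_wellordered x) \<le> to_nat (of_wellordered y)"

definition less_wellordered :: "'a wellordered \<Rightarrow> 'a wellordered \<Rightarrow> bool" where
  "x < y \<longleftrightarrow> to_nat (of_wellordered x) < to_nat (of_wellordered y)"

instance
proof
  fix x y z :: "'a wellordered"
  show "x < y \<longleftrightarrow> x \<le> y \<and> \<not> y \<le> x"
    by (auto simp: less_eq_wellordered_def less_wellordered_def)
  show "x \<le> x"
    by (simp add: less_eq_wellordered_def)
  show "x \<le> y \<Longrightarrow> y \<le> z \<Longrightarrow> x \<le> z"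
    by (simp add: less_eq_wellordered_def)
  show "x \<le> y \<Longrightarrow> y \<le> x \<Longrightarrow> x = y"
    by (simp add: less_eq_wellordered_def of_wellordered_inject[symmetric])
  show "x \<le> y \<or> y \<le> x"
    by (auto simp: less_eq_wellordered_def)
qed

end

instance wellordered :: (finite) wellorder
proof
  fix P :: "'a wellordered \<Rightarrow> bool" and a
  assume step: "\<And>x. (\<And>y. y < x \<Longrightarrow> P y) \<Longrightarrow> P x"
  show "P a"
  proof (induction a rule: measure_induct_rule[of "\<lambda>x. to_nat (of_wellordered x)"])
    case (less x)
    then show ?case
      using step by (auto simp: less_wellordered_def)
  qed
qed

instance wellordered :: (finite) finite
proof
  have "(UNIV :: 'a wellordered set) = range to_wellordered"
    by (metis surj_def to_wellordered_cases)
  then show "finite (UNIV :: 'a wellordered set)"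
    by (metis finite finite_imageI)
qed

lemma bij_of_wellordered: "bij of_wellordered"
  by (rule o_bij[where g = to_wellordered]) (simp_all add: fun_eq_iff of_wellordered_inverse to_wellordered_inverse)

lemma bij_to_wellordered: "bij to_wellordered"
  by (rule o_bij[where g = of_wellordered]) (simp_all add: fun_eq_iff of_wellordered_inverse to_wellordered_inverse)

lemma lborel_distr_orthogonal:
  fixes f :: "real^'n::finite \<Rightarrow> real^'n"
  assumes f: "orthogonal_transformation f"
  shows "distr lborel borel f = lborel"
proof -
  define h :: "real^'n \<Rightarrow> real^'n wellordered" where "h x = (\<chi> i. x $ of_wellordered i)" for x
  define h' :: "real^'n wellordered \<Rightarrow> real^'n" where "h' y = (\<chi> j. y $ to_wellordered j)" for y
  have "linear h" "linear h'" "linear f"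
    using linear_vec_reindex f by (auto simp: h_def[abs_def] h'_def[abs_def] orthogonal_transformation_linear)
  then have meas: "h \<in> borel_measurable borel" "h' \<in> borel_measurable borel" "f \<in> borel_measurable borel"
    by (simp_all add: borel_measurable_continuous_onI linear_continuous_on linear_conv_bounded_linear)
  have "norm (h x) = norm x" "norm (h' y) = norm y" for x y
    unfolding h_def h'_def by (simp_all add: norm_vec_reindex bij_of_wellordered bij_to_wellordered)
  then have "orthogonal_transformation (h \<circ> f \<circ> h')"
    using f \<open>linear h\<close> \<open>linear h'\<close> by (simp add: orthogonal_transformation linear_compose)
  moreover have "distr lborel borel h = lborel" "distr lborel borel h' = lborel"
    unfolding h_def[abs_def] h'_def[abs_def]
    by (simp_all add: lborel_distr_vec_reindex bij_of_wellordered bij_to_wellordered)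
  ultimately have "lborel = distr (distr (distr lborel borel h) borel (h \<circ> f \<circ> h')) borel h'"
    by (simp add: lborel_distr_orthogonal_wellorder)
  also have "\<dots> = distr lborel borel (h' \<circ> (h \<circ> f \<circ> h') \<circ> h)"
    using meas by (simp add: distr_distr measurable_comp comp_assoc)
  also have "h' \<circ> (h \<circ> f \<circ> h') \<circ> h = f"
    by (simp add: fun_eq_iff h_def h'_def vec_eq_iff to_wellordered_inverse)
  finally show ?thesis
    by simp
qed

lemma abs_inner_le_infdist:
  fixes u :: "'a::euclidean_space"
  assumes V: "subspace V" and u: "\<And>v. v \<in> V \<Longrightarrow> orthogonal v u" "norm u = 1"
  shows "\<bar>u \<bullet> x\<bar> \<le> infdist x V"
proof -
  have "\<bar>u \<bullet> x\<bar> \<le> dist x v" if "v \<in> V" for v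
  proof -
    have "u \<bullet> x = u \<bullet> (x - v)"
      using u(1)[OF that] by (simp add: orthogonal_def inner_diff_right inner_commute)
    also have "\<bar>\<dots>\<bar> \<le> norm u * norm (x - v)"
      by (rule Cauchy_Schwarz_ineq2)
    finally show ?thesis
      using u(2) by (simp add: dist_norm)
  qed
  then show ?thesis
    using subspace_0[OF V] by (subst infdist_notempty) (auto intro!: cINF_greatest)
qed

lemma orthonormal_basis_adapted_to_subspace:
  fixes V :: "(real^'n::finite) set"
  assumes V: "subspace V"
  obtains B BW :: "(real^'n) set"
  where "pairwise orthogonal B" "\<And>x. x \<in> B \<Longrightarrow> norm x = 1" "card B = CARD('n)"
    "BW \<subseteq> B" "card BW = CARD('n) - dim V"
    "\<And>x v. x \<in> BW \<Longrightarrow> v \<in> V \<Longrightarrow> orthogonal v x"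
proof -
  define W where "W = {y. \<forall>x\<in>V. orthogonal x y}"
  have W: "subspace W"
    unfolding W_def by (rule subspace_orthogonal_to_vectors)
  have dim_W: "dim W + dim V = CARD('n)"
    using dim_subspace_orthogonal_to_vectors[OF V subspace_UNIV] by (simp add: W_def)
  obtain BV where BV: "BV \<subseteq> V" "pairwise orthogonal BV" "\<And>x. x \<in> BV \<Longrightarrow> norm x = 1"
      "independent BV" "card BV = dim V"
    using orthonormal_basis_subspace[OF V] by metis
  obtain BW where BW: "BW \<subseteq> W" "pairwise orthogonal BW" "\<And>x. x \<in> BW \<Longrightarrow> norm x = 1"
      "independent BW" "card BW = dim W"
    using orthonormal_basis_subspace[OF W] by metis
  have cross: "orthogonal x y" if "x \<in> BV" "y \<in> BW" for x y
    using that BV(1) BW(1) by (auto simp: W_def)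
  then have "BV \<inter> BW = {}"
    using BV(3) by (fastforce simp: orthogonal_def)
  show ?thesis
  proof
    show "pairwise orthogonal (BW \<union> BV)"
      unfolding pairwise_def using BV(2) BW(2) cross
      by (metis Un_iff orthogonal_commute pairwise_def)
    show "card (BW \<union> BV) = CARD('n)"
      using card_Un_disjoint[of BW BV] \<open>BV \<inter> BW = {}\<close> BV(4,5) BW(4,5) dim_W
      by (auto simp: independent_imp_finite)
    show "card BW = CARD('n) - dim V"
      using BW(5) dim_W by simp
    show "orthogonal v x" if "x \<in> BW" "v \<in> V" for x v
      using that BW(1) by (auto simp: W_def)
  qed (use BV(3) BW(3) in auto)
qed

lemma orthogonal_transformation_adapted_to_subspace:
  fixes V :: "(real^'n::finite) set"
  assumes V: "subspace V"
  obtains f :: "real^'n \<Rightarrow> real^'n" and J :: "'n set"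
  where "orthogonal_transformation f" "card J = CARD('n) - dim V"
    "\<And>x i. i \<in> J \<Longrightarrow> \<bar>f x $ i\<bar> \<le> infdist x V"
proof -
  obtain B BW :: "(real^'n) set"
    where B: "pairwise orthogonal B" "\<And>x. x \<in> B \<Longrightarrow> norm x = 1" "card B = CARD('n)"
      and BW: "BW \<subseteq> B" "card BW = CARD('n) - dim V"
        "\<And>x v. x \<in> BW \<Longrightarrow> v \<in> V \<Longrightarrow> orthogonal v x"
    using orthonormal_basis_adapted_to_subspace[OF V] by blast
  have "finite B"
    using B(1) by (rule pairwise_orthogonal_imp_finite)
  then obtain p :: "'n \<Rightarrow> real^'n" where p: "bij_betw p UNIV B"
    using finite_same_card_bij[of "UNIV :: 'n set" B] B(3) by auto
  have "norm (p i) = 1" for i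
    using bij_betwE[OF p] B(2) by auto
  moreover have "orthogonal (p i) (p j)" if "i \<noteq> j" for i j
    using p that B(1) by (auto simp: bij_betw_def inj_on_def pairwise_def)
  ultimately have "orthogonal_matrix (\<chi> i. p i)"
    by (simp add: orthogonal_matrix_orthonormal_rows row_def vec_lambda_eta)
  then have "orthogonal_transformation (\<lambda>x. (\<chi> i. p i) *v x)"
    by (simp add: orthogonal_transformation_matrix)
  moreover have "card (p -` BW) = CARD('n) - dim V"
    using p card_vimage_inj[of p BW] BW(1,2) by (auto simp: bij_betw_def)
  moreover have "\<bar>((\<chi> i. p i) *v x) $ i\<bar> \<le> infdist x V" if "i \<in> p -` BW" for x i
    using abs_inner_le_infdist[OF V BW(3)] that bij_betwE[OF p] BW(1) B(2)
    by (auto simp: matrix_vector_mul_component)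
  ultimately show ?thesis
    using that by blast
qed

lemma emeasure_cball_infdist_le:
  fixes V :: "(real^'n::finite) set"
  assumes V: "subspace V" and t: "0 < t"
  shows "emeasure lborel (cball 0 1 \<inter> {x. infdist x V \<le> t}) \<le> ennreal (2 ^ CARD('n) * t ^ (CARD('n) - dim V))"
proof -
  obtain f :: "real^'n \<Rightarrow> real^'n" and J :: "'n set"
    where f: "orthogonal_transformation f" and J: "card J = CARD('n) - dim V"
      and f_J: "\<And>x i. i \<in> J \<Longrightarrow> \<bar>f x $ i\<bar> \<le> infdist x V"
    using orthogonal_transformation_adapted_to_subspace[OF V] by blast
  have "linear f"
    using f by (rule orthogonal_transformation_linear)
  then have f_meas: "f \<in> borel_measurable borel"
    by (simp add: borel_measurable_continuous_onI linear_continuous_on linear_conv_bounded_linear)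
  define c :: "real^'n" where "c = (\<chi> i. if i \<in> J then t else 1)"
  have "\<bar>f x $ i\<bar> \<le> c $ i" if "x \<in> cball 0 1 \<inter> {x. infdist x V \<le> t}" for x i
    using that f_J[of i x] component_le_norm_cart[of "f x" i] orthogonal_transformation_norm[OF f]
    by (auto simp: c_def)
  then have "cball 0 1 \<inter> {x. infdist x V \<le> t} \<subseteq> f -` cbox (-c) c"
    by (auto simp: mem_box_cart abs_le_iff minus_le_iff)
  then have "emeasure lborel (cball 0 1 \<inter> {x. infdist x V \<le> t}) \<le> emeasure lborel (f -` cbox (-c) c)"
    using measurable_sets_borel[OF f_meas, of "cbox (-c) c"] by (intro emeasure_mono) simp_all
  also have "\<dots> = emeasure (distr lborel borel f) (cbox (-c) c)"
    using f_meas by (simp add: emeasure_distr)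
  also have "\<dots> = ennreal (\<Prod>i\<in>UNIV. c $ i - (-c) $ i)"
    using t by (simp add: lborel_distr_orthogonal[OF f] emeasure_lborel_cbox_cart c_def)
  also have "(\<Prod>i\<in>UNIV. c $ i - (-c) $ i) = (\<Prod>i\<in>UNIV. if i \<in> J then 2 * t else 2)"
    by (intro prod.cong) (auto simp: c_def)
  also have "\<dots> = (2 * t) ^ card J * 2 ^ card (- J)"
    by (simp add: prod.If_cases Int_def Compl_eq)
  also have "\<dots> = 2 ^ CARD('n) * t ^ (CARD('n) - dim V)"
  proof -
    have "card J \<le> CARD('n)"
      by (rule card_mono) simp_all
    then have "(2::real) ^ card J * 2 ^ (CARD('n) - card J) = 2 ^ CARD('n)"
      by (simp add: power_add[symmetric])
    then show ?thesis
      using J by (simp add: Compl_eq_Diff_UNIV card_Diff_subset power_mult_distrib)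
  qed
  finally show ?thesis .
qed

lemma ennreal_le_suminf: "(f :: nat \<Rightarrow> ennreal) j \<le> suminf f"
  using sum_le_suminf[of f "{j}"] by simp

lemma suminf_ennreal_eq_top:
  assumes ge_1: "\<And>j. 1 \<le> f j"
  shows "(\<Sum>j. ennreal (f j)) = top"
proof (rule summable_iff_suminf_neq_top)
  show "0 \<le> f j" for j
    using ge_1[of j] by linarith
  show "\<not> summable f"
  proof
    assume "summable f"
    then have "f \<longlonglongrightarrow> 0"
      by (rule summable_LIMSEQ_zero)
    then have "1 \<le> (0::real)"
      by (rule LIMSEQ_le_const) (use ge_1 in blast)
    then show False
      by simp
  qed
qed

lemma half_power_bracket:
  fixes r :: real
  assumes "0 < r" "r \<le> 1"
  obtains j where "(1/2)^(Suc j) < r" "r \<le> (1/2)^j"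
proof -
  have "\<exists>j. \<not> (1/2::real)^j < r \<and> (1/2)^(Suc j) < r"
  proof (rule exists_least_lemma)
    show "\<not> (1/2::real)^0 < r"
      using assms by simp
    show "\<exists>n. (1/2::real)^n < r"
      using real_arch_pow_inv[OF assms(1), of "1/2"] by simp
  qed
  then show ?thesis
    using that by (auto simp: not_less)
qed

lemma singular_powr_le_dyadic_sum:
  assumes p: "0 \<le> p" and r: "0 \<le> r" "r \<le> 1"
  shows "singular_powr (-p) r \<le> (\<Sum>j. ennreal (2 powr (p * Suc j)) * indicator {..(1/2::real)^j} r)"
proof (cases "r = 0")
  case True
  have "1 \<le> 2 powr (p * Suc j)" for j
    using p by (intro ge_one_powr_ge_zero) auto
  then have "(\<Sum>j. ennreal (2 powr (p * Suc j))) = top"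
    by (rule suminf_ennreal_eq_top)
  then show ?thesis
    using True by (simp add: singular_powr_def)
next
  case False
  then have "0 < r"
    using r(1) by simp
  then obtain j where j: "(1/2)^(Suc j) < r" "r \<le> (1/2)^j"
    using half_power_bracket r(2) by blast
  have "r powr (-p) \<le> ((1/2)^(Suc j)) powr (-p)"
    using p j(1) by (intro powr_mono2') auto
  also have "(1/2::real)^(Suc j) = 2 powr (- real (Suc j))"
    by (metis powr_minus_divide powr_realpow power_one_over zero_less_numeral)
  also have "(2 powr (- real (Suc j))) powr (-p) = 2 powr (p * Suc j)"
    by (simp add: powr_powr algebra_simps)
  finally have "singular_powr (-p) r \<le> ennreal (2 powr (p * Suc j)) * indicator {..(1/2::real)^j} r"
    using False j(2) r(1) by (simp add: singular_powr_def ennreal_leI)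
  also have "\<dots> \<le> (\<Sum>j. ennreal (2 powr (p * Suc j)) * indicator {..(1/2::real)^j} r)"
    by (rule ennreal_le_suminf)
  finally show ?thesis .
qed

lemma two_powr_Suc_mult_half_power:
  fixes p :: real and j k :: nat
  shows "2 powr (p * Suc j) * ((1/2)^j)^k = 2 powr p * (2 powr (p - k))^j"
proof -
  have "((1/2::real)^j)^k = 2 powr (- real (j * k))"
    by (metis power_mult powr_minus_divide powr_realpow power_one_over zero_less_numeral)
  moreover have "(2 powr (p - k))^j = 2 powr ((p - k) * j)"
    by (simp add: powr_realpow[symmetric] powr_powr)
  ultimately show ?thesis
    by (simp add: powr_add[symmetric] algebra_simps)
qed

lemma nn_integral_singular_powr_le:
  fixes r :: "'a \<Rightarrow> real" and p :: real and k :: nat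
  assumes r_meas [measurable]: "r \<in> borel_measurable M"
    and r_range: "\<And>x. x \<in> space M \<Longrightarrow> 0 \<le> r x \<and> r x \<le> 1"
    and level: "\<And>t. 0 < t \<Longrightarrow> emeasure M {x \<in> space M. r x \<le> t} \<le> ennreal (A * t ^ k)"
    and A: "0 \<le> A" and p: "0 \<le> p" "p < k"
  shows "(\<integral>\<^sup>+x. singular_powr (-p) (r x) \<partial>M) \<le> ennreal (A * 2 powr p / (1 - 2 powr (p - k)))"
proof -
  define q where "q = 2 powr (p - k)"
  have "q < 2 powr 0"
    unfolding q_def using p by (intro powr_less_mono) auto
  then have q: "0 < q" "q < 1"
    by (simp_all add: q_def)
  define L where "L j = {x \<in> space M. r x \<le> (1/2)^j}" for j :: nat
  have L_sets [measurable]: "L j \<in> sets M" for j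
    unfolding L_def by measurable
  have "(\<integral>\<^sup>+x. singular_powr (-p) (r x) \<partial>M)
      \<le> (\<integral>\<^sup>+x. (\<Sum>j. ennreal (2 powr (p * Suc j)) * indicator (L j) x) \<partial>M)"
  proof (rule nn_integral_mono)
    fix x
    assume x: "x \<in> space M"
    then have "indicator (L j) x = (indicator {..(1/2)^j} (r x) :: ennreal)" for j
      by (simp add: L_def indicator_def)
    then show "singular_powr (-p) (r x) \<le> (\<Sum>j. ennreal (2 powr (p * Suc j)) * indicator (L j) x)"
      using singular_powr_le_dyadic_sum[OF p(1)] r_range[OF x] by simp
  qed
  also have "\<dots> = (\<Sum>j. ennreal (2 powr (p * Suc j)) * emeasure M (L j))"
    by (simp add: nn_integral_suminf nn_integral_cmult_indicator)
  also have "\<dots> \<le> (\<Sum>j. ennreal (A * 2 powr p * q ^ j))"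
  proof (rule suminf_le)
    fix j
    have "ennreal (2 powr (p * Suc j)) * emeasure M (L j)
        \<le> ennreal (2 powr (p * Suc j)) * ennreal (A * ((1/2)^j)^k)"
      using level[of "(1/2)^j"] by (intro mult_left_mono) (simp_all add: L_def)
    also have "\<dots> = ennreal (2 powr (p * Suc j) * (A * ((1/2)^j)^k))"
      by (rule ennreal_mult'[symmetric]) simp
    also have "\<dots> = ennreal (A * 2 powr p * q ^ j)"
      using two_powr_Suc_mult_half_power[of p j k] by (simp add: q_def mult_ac)
    finally show "ennreal (2 powr (p * Suc j)) * emeasure M (L j) \<le> ennreal (A * 2 powr p * q ^ j)" .
  qed auto
  also have "\<dots> = ennreal (\<Sum>j. A * 2 powr p * q ^ j)"
    using q A by (intro suminf_ennreal2 summable_mult summable_geometric) auto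
  also have "(\<Sum>j. A * 2 powr p * q ^ j) = A * 2 powr p / (1 - q)"
    using q by (simp add: suminf_mult summable_geometric suminf_geometric)
  finally show ?thesis
    by (simp add: q_def)
qed

lemma borel_measurable_sphere_measure_id: "(\<lambda>x. x) \<in> borel_measurable (sphere_measure :: (real^'n::finite) measure)"
proof -
  have "sets (sphere_measure :: (real^'n) measure) = sets (restrict_space borel (sphere 0 1))"
    by (simp add: sphere_measure_def)
  then show ?thesis
    using measurable_restrict_space1[OF measurable_ident_sets[OF refl]] measurable_cong_sets by blast
qed

lemma nn_integral_sphere_measure:
  fixes f :: "real^'n::finite \<Rightarrow> ennreal"
  assumes f [measurable]: "f \<in> borel_measurable borel"
  shows "(\<integral>\<^sup>+y. f y \<partial>sphere_measure) =
    (\<integral>\<^sup>+x. ennreal (real CARD('n)) * f (x /\<^sub>R norm x) \<partial>restrict_space lborel (cball 0 1 - {0}))"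
proof -
  let ?L = "restrict_space lborel (cball (0::real^'n) 1 - {0})"
  let ?S = "restrict_space borel (sphere (0::real^'n) 1)"
  have proj: "(\<lambda>x::real^'n. x /\<^sub>R norm x) \<in> ?L \<rightarrow>\<^sub>M ?S"
    by (rule measurable_restrict_space3) auto
  have "f \<in> borel_measurable ?S"
    by (rule measurable_restrict_space1) simp
  then have f_distr: "f \<in> borel_measurable (distr ?L ?S (\<lambda>x. x /\<^sub>R norm x))"
    by simp
  have "(\<integral>\<^sup>+y. f y \<partial>sphere_measure)
      = (\<integral>\<^sup>+y. ennreal (real CARD('n)) * f y \<partial>distr ?L ?S (\<lambda>x. x /\<^sub>R norm x))"
    unfolding sphere_measure_def by (rule nn_integral_density[OF _ f_distr]) simp
  also have "\<dots> = (\<integral>\<^sup>+x. ennreal (real CARD('n)) * f (x /\<^sub>R norm x) \<partial>?L)"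
    using f_distr by (intro nn_integral_distr[OF proj]) simp
  finally show ?thesis .
qed

lemma finite_measure_sphere_measure: "finite_measure (sphere_measure :: (real^'n::finite) measure)"
proof
  let ?L = "restrict_space lborel (cball (0::real^'n) 1 - {0})"
  let ?S = "sphere_measure :: (real^'n) measure"
  have "emeasure ?S (space ?S) = (\<integral>\<^sup>+y. 1 \<partial>?S)"
    by simp
  also have "\<dots> = (\<integral>\<^sup>+x. ennreal (real CARD('n)) * 1 \<partial>?L)"
    using nn_integral_sphere_measure[of "\<lambda>_. 1"] by simp
  also have "\<dots> = ennreal (real CARD('n)) * emeasure lborel (cball (0::real^'n) 1 - {0})"
    by (simp add: emeasure_restrict_space space_restrict_space)
  finally have "emeasure ?S (space ?S) = ennreal (real CARD('n)) * emeasure lborel (cball (0::real^'n) 1 - {0})" .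
  moreover have "emeasure lborel (cball (0::real^'n) 1 - {0}) < \<infinity>"
    by (intro emeasure_bounded_finite bounded_diff) simp
  ultimately show "emeasure ?S (space ?S) \<noteq> \<infinity>"
    by (simp add: ennreal_mult_eq_top_iff)
qed

lemma infdist_scaleR_le:
  fixes x :: "'a::real_normed_vector"
  assumes V: "subspace V" and c: "\<bar>c\<bar> \<le> 1"
  shows "infdist (c *\<^sub>R x) V \<le> infdist x V"
proof -
  have "infdist (c *\<^sub>R x) V \<le> dist x v" if "v \<in> V" for v
  proof -
    have "infdist (c *\<^sub>R x) V \<le> dist (c *\<^sub>R x) (c *\<^sub>R v)"
      using subspace_scale[OF V that] by (rule infdist_le)
    also have "\<dots> = \<bar>c\<bar> * dist x v"
      by (simp add: dist_norm flip: scaleR_diff_right)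
    also have "\<dots> \<le> dist x v"
      using c by (simp add: mult_left_le_one_le)
    finally show ?thesis .
  qed
  then show ?thesis
    using subspace_0[OF V] by (subst (2) infdist_notempty) (auto intro!: cINF_greatest)
qed

lemma borel_measurable_infdist [measurable]: "(\<lambda>x. infdist x V) \<in> borel_measurable borel"
  by (intro borel_measurable_continuous_onI continuous_on_infdist continuous_on_id)

lemma nn_integral_sphere_singular_powr_infdist_le:
  fixes V :: "(real^'n::finite) set" and p :: real
  assumes V: "subspace V" and p: "0 \<le> p" "p < CARD('n) - dim V"
  shows "(\<integral>\<^sup>+y. singular_powr (-p) (infdist y V) \<partial>sphere_measure)
    \<le> ennreal (CARD('n) * (2 ^ CARD('n) * 2 powr p / (1 - 2 powr (p - (CARD('n) - dim V)))))"
proof -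
  let ?M = "restrict_space lborel (cball (0::real^'n) 1 - {0})"
  let ?r = "\<lambda>x. infdist x V"
  have r_meas: "?r \<in> borel_measurable ?M"
    by (intro measurable_restrict_space1) simp
  have r_range: "0 \<le> ?r x \<and> ?r x \<le> 1" if "x \<in> space ?M" for x
    using that infdist_le[OF subspace_0[OF V], of x] by (auto simp: space_restrict_space infdist_nonneg)
  have level: "emeasure ?M {x \<in> space ?M. ?r x \<le> t} \<le> ennreal (2 ^ CARD('n) * t ^ (CARD('n) - dim V))"
    if "0 < t" for t
  proof -
    have "emeasure ?M {x \<in> space ?M. ?r x \<le> t} = emeasure lborel {x \<in> cball 0 1 - {0}. ?r x \<le> t}"
      by (subst emeasure_restrict_space) (auto simp: space_restrict_space)
    also have "\<dots> \<le> emeasure lborel (cball 0 1 \<inter> {x. ?r x \<le> t})"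
      by (intro emeasure_mono) auto
    also have "\<dots> \<le> ennreal (2 ^ CARD('n) * t ^ (CARD('n) - dim V))"
      by (rule emeasure_cball_infdist_le[OF V that])
    finally show ?thesis .
  qed
  have "(\<integral>\<^sup>+y. singular_powr (-p) (infdist y V) \<partial>sphere_measure)
      = (\<integral>\<^sup>+x. ennreal CARD('n) * singular_powr (-p) (infdist (x /\<^sub>R norm x) V) \<partial>?M)"
    by (intro nn_integral_sphere_measure) simp
  also have "\<dots> \<le> (\<integral>\<^sup>+x. ennreal CARD('n) * singular_powr (-p) (?r x) \<partial>?M)"
  proof (intro nn_integral_mono mult_left_mono)
    fix x
    assume "x \<in> space ?M"
    then have "infdist (norm x *\<^sub>R (x /\<^sub>R norm x)) V \<le> infdist (x /\<^sub>R norm x) V"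
      by (intro infdist_scaleR_le[OF V]) (auto simp: space_restrict_space)
    then show "singular_powr (-p) (infdist (x /\<^sub>R norm x) V) \<le> singular_powr (-p) (?r x)"
      using \<open>x \<in> space ?M\<close> p(1)
      by (intro singular_powr_antimono) (auto simp: space_restrict_space infdist_nonneg)
  qed simp
  also have "\<dots> = ennreal CARD('n) * (\<integral>\<^sup>+x. singular_powr (-p) (?r x) \<partial>?M)"
    using r_meas by (intro nn_integral_cmult borel_measurable_singular_powr)
  also have "\<dots> \<le> ennreal CARD('n) * ennreal (2 ^ CARD('n) * 2 powr p / (1 - 2 powr (p - (CARD('n) - dim V))))"
    using nn_integral_singular_powr_le[OF r_meas r_range level _ p] by (intro mult_left_mono) auto
  finally show ?thesis
    by (simp add: ennreal_mult'[symmetric])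
qed

lemma nn_integral_sphere_singular_powr_infdist_le_uniform:
  fixes V :: "(real^'n::finite) set" and p s :: real
  assumes V: "subspace V" "dim V < CARD('n)" and s: "0 < s" "s < 1"
    and p: "0 \<le> p" "p \<le> (CARD('n) - dim V) * s"
  shows "(\<integral>\<^sup>+y. singular_powr (-p) (infdist y V) \<partial>sphere_measure)
    \<le> ennreal (CARD('n) * 4 ^ CARD('n) / (1 - 2 powr (s - 1)))"
proof -
  define k where "k = CARD('n) - dim V"
  have k: "1 \<le> k" "k \<le> CARD('n)"
    using V(2) by (simp_all add: k_def)
  have "p \<le> k * s"
    using p(2) by (simp add: k_def)
  moreover have "k * s - k \<le> s - 1"
    using k(1) s(2) mult_right_mono_neg[of 1 k "s - 1"] by (simp add: algebra_simps)
  ultimately have "p - k \<le> s - 1" "p < k"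
    using s k(1) by (auto intro: order.strict_trans1[of p "k * s"])
  have "2 powr (s - 1) < 2 powr 0"
    using s by (intro powr_less_mono) auto
  moreover have "2 powr (p - k) \<le> 2 powr (s - 1)"
    using \<open>p - k \<le> s - 1\<close> by (intro powr_mono) auto
  ultimately have denom: "0 < 1 - 2 powr (s - 1)" "1 - 2 powr (s - 1) \<le> 1 - 2 powr (p - k)"
    by simp_all
  have "2 powr p \<le> 2 powr real CARD('n)"
    using \<open>p < k\<close> k(2) by (intro powr_mono) simp_all
  then have "2 ^ CARD('n) * 2 powr p \<le> (2::real) ^ CARD('n) * 2 ^ CARD('n)"
    by (simp add: powr_realpow)
  also have "\<dots> = 4 ^ CARD('n)"
    by (simp flip: power_mult_distrib)
  finally have "2 ^ CARD('n) * 2 powr p \<le> (4::real) ^ CARD('n)" .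
  then have frac: "2 ^ CARD('n) * 2 powr p / (1 - 2 powr (p - k)) \<le> 4 ^ CARD('n) / (1 - 2 powr (s - 1))"
    using denom by (intro frac_le) simp_all
  have "CARD('n) * (2 ^ CARD('n) * 2 powr p / (1 - 2 powr (p - k)))
      \<le> CARD('n) * 4 ^ CARD('n) / (1 - 2 powr (s - 1))"
    using mult_left_mono[OF frac, of "real CARD('n)"] by simp
  then show ?thesis
    using nn_integral_sphere_singular_powr_infdist_le[OF V(1) p(1) \<open>p < k\<close>[unfolded k_def]]
    by (auto simp: k_def intro: order_trans ennreal_leI)
qed

lemma borel_measurable_gram_det:
  fixes M :: "(real^'n::finite) measure" and S :: "'m::finite set"
  assumes M: "(\<lambda>x. x) \<in> borel_measurable M" and "S \<subseteq> I"
  shows "(\<lambda>w. gram_det S w) \<in> borel_measurable (PiM I (\<lambda>_. M))"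
proof -
  have "(\<lambda>w. w i) \<in> borel_measurable (PiM I (\<lambda>_. M))" if "i \<in> S" for i
    using measurable_compose[OF measurable_component_singleton[of i I "\<lambda>_. M"] M] that assms(2)
    by auto
  then have "(\<lambda>w. gram_on S w w $ i $ j) \<in> borel_measurable (PiM I (\<lambda>_. M))" for i j
    by (cases "i \<in> S \<and> j \<in> S") (auto simp: gram_on_def intro: borel_measurable_inner)
  then show ?thesis
    unfolding gram_det_def det_def by measurable
qed

lemma singular_powr_gram_det_insert:
  fixes w :: "'m::finite \<Rightarrow> real^'n"
  assumes "k \<notin> S"
  shows "singular_powr a (gram_det (insert k S) (w(k := y)))
    = singular_powr a (gram_det S w) * singular_powr (2 * a) (infdist y (span (w ` S)))"
proof -
  have "gram_det S (w(k := y)) = gram_det S w" and "(w(k := y)) ` S = w ` S"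
    using assms by (auto intro: gram_det_cong)
  then show ?thesis
    using gram_det_insert[OF assms, of "w(k := y)"]
    by (simp add: singular_powr_mult singular_powr_square)
qed

lemma nn_integral_singular_powr_gram_det_insert_le:
  fixes M :: "(real^'n::finite) measure" and w :: "'m::finite \<Rightarrow> real^'n"
  assumes M: "(\<lambda>x. x) \<in> borel_measurable M" and k: "k \<notin> S"
    and bound: "\<And>V. subspace V \<Longrightarrow> dim V < CARD('m)
      \<Longrightarrow> (\<integral>\<^sup>+y. singular_powr (2 * a) (infdist y V) \<partial>M) \<le> ennreal B"
  shows "(\<integral>\<^sup>+y. singular_powr a (gram_det (insert k S) (w(k := y))) \<partial>M)
    \<le> singular_powr a (gram_det S w) * ennreal B"
proof -
  have "card (insert k S) \<le> CARD('m)"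
    by (rule card_mono) simp_all
  then have "dim (span (w ` S)) < CARD('m)"
    using dim_le_card'[of "w ` S"] card_image_le[of S w] k by simp
  then have "(\<integral>\<^sup>+y. singular_powr (2 * a) (infdist y (span (w ` S))) \<partial>M) \<le> ennreal B"
    by (intro bound) simp_all
  then show ?thesis
    using M by (simp add: singular_powr_gram_det_insert[OF k] nn_integral_cmult
        mult_left_mono measurable_compose[OF _ borel_measurable_singular_powr])
qed

lemma nn_integral_singular_powr_gram_det_le:
  fixes M :: "(real^'n::finite) measure" and S :: "'m::finite set"
  assumes M: "sigma_finite_measure M" "(\<lambda>x. x) \<in> borel_measurable M" and B: "0 \<le> B"
    and bound: "\<And>V. subspace V \<Longrightarrow> dim V < CARD('m)
      \<Longrightarrow> (\<integral>\<^sup>+y. singular_powr (2 * a) (infdist y V) \<partial>M) \<le> ennreal B"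
  shows "(\<integral>\<^sup>+w. singular_powr a (gram_det S w) \<partial>PiM S (\<lambda>_. M)) \<le> ennreal (B ^ card S)"
proof -
  interpret product_sigma_finite "\<lambda>_::'m. M"
    using M(1) by (simp add: product_sigma_finite_def)
  have meas: "(\<lambda>w. singular_powr a (gram_det S w)) \<in> borel_measurable (PiM I (\<lambda>_. M))"
    if "S \<subseteq> I" for S I :: "'m set"
    using borel_measurable_gram_det[OF M(2) that] by measurable
  have "finite S"
    by simp
  then show ?thesis
  proof (induction S rule: finite_induct)
    case empty
    then show ?case
      by (simp add: gram_det_empty singular_powr_def PiM_empty)
  next
    case (insert k S)
    have "(\<integral>\<^sup>+w. singular_powr a (gram_det (insert k S) w) \<partial>PiM (insert k S) (\<lambda>_. M))
        = (\<integral>\<^sup>+w. (\<integral>\<^sup>+y. singular_powr a (gram_det (insert k S) (w(k := y))) \<partial>M)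
            \<partial>PiM S (\<lambda>_. M))"
      using insert.hyps meas[of "insert k S"] by (intro product_nn_integral_insert) auto
    also have "\<dots> \<le> (\<integral>\<^sup>+w. singular_powr a (gram_det S w) * ennreal B \<partial>PiM S (\<lambda>_. M))"
      using M(2) bound insert.hyps(2) by (intro nn_integral_mono nn_integral_singular_powr_gram_det_insert_le)
    also have "\<dots> = (\<integral>\<^sup>+w. singular_powr a (gram_det S w) \<partial>PiM S (\<lambda>_. M)) * ennreal B"
      using meas[of S] by (intro nn_integral_multc) auto
    also have "\<dots> \<le> ennreal (B ^ card S) * ennreal B"
      by (intro mult_right_mono insert.IH) simp
    also have "\<dots> = ennreal (B ^ card (insert k S))"
      using insert.hyps B by (simp add: ennreal_mult[symmetric] mult.commute)
    finally show ?case .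
  qed
qed

theorem lemma2p4:
  assumes "CARD('m::finite) < CARD('n::finite)"
    and "0 < s\<^sub>0" and "s\<^sub>0 < (1::real)"
  shows "\<exists>C::real. C > 0 \<and>
           (\<forall>\<alpha>::real. - (real (CARD('n) - CARD('m) + 1) / 2) * s\<^sub>0 < \<alpha> \<and> \<alpha> < 0 \<longrightarrow>
              (\<integral>\<^sup>+ w. gram_power \<alpha> (w :: 'm \<Rightarrow> real ^ 'n)
                   \<partial>(PiM (UNIV :: 'm set) (\<lambda>_. sphere_measure))) \<le> ennreal C)"
proof -
  define B where "B = real CARD('n) * 4 ^ CARD('n) / (1 - 2 powr (s\<^sub>0 - 1))"
  have "2 powr (s\<^sub>0 - 1) < 2 powr 0"
    using assms(3) by (intro powr_less_mono) auto
  then have "0 < B"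
    by (simp add: B_def)
  have sphere_bound: "(\<integral>\<^sup>+y. singular_powr (2 * \<alpha>) (infdist y V) \<partial>sphere_measure) \<le> ennreal B"
    if \<alpha>: "- (real (CARD('n) - CARD('m) + 1) / 2) * s\<^sub>0 < \<alpha>" "\<alpha> < 0"
      and V: "subspace V" "dim V < CARD('m)" for \<alpha> and V :: "(real^'n) set"
  proof -
    have "-2 * \<alpha> < real (CARD('n) - CARD('m) + 1) * s\<^sub>0"
      using \<alpha>(1) by (simp add: field_simps)
    also have "\<dots> \<le> real (CARD('n) - dim V) * s\<^sub>0"
      using V(2) assms(1,2) by (intro mult_right_mono) simp_all
    finally show ?thesis
      using nn_integral_sphere_singular_powr_infdist_le_uniform[OF V(1) _ assms(2,3), of "-2 * \<alpha>"]
        V(2) assms(1) \<alpha>(2) by (simp add: B_def)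
  qed
  have "(\<integral>\<^sup>+w. gram_power \<alpha> (w :: 'm \<Rightarrow> real^'n) \<partial>PiM UNIV (\<lambda>_. sphere_measure))
      \<le> ennreal (B ^ CARD('m))"
    if "- (real (CARD('n) - CARD('m) + 1) / 2) * s\<^sub>0 < \<alpha>" "\<alpha> < 0" for \<alpha>
    using nn_integral_singular_powr_gram_det_le[OF finite_measure.axioms(1)[OF finite_measure_sphere_measure]
        borel_measurable_sphere_measure_id _ sphere_bound[OF that], of UNIV] \<open>0 < B\<close>
    by (simp add: gram_power_eq_singular_powr)
  then show ?thesis
    using \<open>0 < B\<close> by (intro exI[of _ "B ^ CARD('m)"]) auto
qed

end
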